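(* With the setup of the context, let $\mu$ be any weight on $F$. Then for every $x\in V(G)$ and $y\in V(H)$, $$\mathbb P_{F,\mu}(x\sim_F y)=\mathbb P_{G,\mu}(x\sim_G v^-)\,\mathbb P_{H_0,\mu}(v^-\sim_{H_0} y)+\mathbb P_{G,\mu}(x\sim_G v^+)\,\mathbb P_{H_0,\mu}(v^+\sim_{H_0} y)-\mathbb P_{G,\mu}(x\sim_G v^-\cap x\sim_G v^+)\,\mathbb P_{H_0,\mu}(v^-\sim_{H_0} y\cap v^+\sim_{H_0} y),$$ where $\mathbb P_{G,\mu}$ and $\mathbb P_{H_0,\mu}$ denote the percolation measures with respect to the restrictions of $\mu$ to $E(G)$ and $E(H_0)$ respectively.
   Context: All graphs are finite and simple. For a graph $G$, a weight is a function $\mu\colon E(G)\to[0,1]$; the associated edge-percolation probability space has sample space $\mathscr P(E(G))$, with $\mathbb P_{G,\mu}(X)=\prod_{e\in X}\mu(e)\prod_{e\notin X}(1-\mu(e))$ for $X\subseteq E(G)$ (edges independently open, edge $e$ with probability $\mu(e)$). For vertices $x,y$, $(x\sim_G y)$ is the event that $x$ and $y$ are joined by a path of open edges of $G$. The bunkbed graph $BB(G)=G\,\Box\,K_2$ has vertex set $V(G)\times\{0,1\}$, writing $x^-=(x,0)$, $x^+=(x,1)$, with edges $x^-y^-$ and $x^+y^+$ for every $xy\in E(G)$ and vertical edges $x^-x^+$ for every $x\in V(G)$. Setup: let $\overline F$ be a graph and $v\in V(\overline F)$ a cut vertex; let $V_1,\dots,V_k$ ($k\ge2$) be the vertex sets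 of the components of $\overline F\setminus\{v\}$, fix $I\subseteq\{1,\dots,k\}$, and set $\overline G=\overline F[\bigcup_{i\in I}V_i\cup\{v\}]$, $\overline H=\overline F[\bigcup_{i\notin I}V_i\cup\{v\}]$ (induced subgraphs). Let $F=BB(\overline F)$, $G=BB(\overline G)$, $H=BB(\overline H)$, regarded as subgraphs of $F$, and $H_0=H\setminus\{v^-v^+\}$ (the graph $H$ with the edge $v^-v^+$ removed); thus $E(F)$ is the disjoint union of $E(G)$ and $E(H_0)$. *)

theory Defs
  imports Complex_Main
begin

definition simple_graph :: "'a set \<Rightarrow> 'a set set \<Rightarrow> bool" where
  "simple_graph V E \<longleftrightarrow> finite V \<and> (\<forall>e\<in>E. e \<subseteq> V \<and> card e = 2)"

definition joined :: "'a set set \<Rightarrow> 'a \<Rightarrow> 'a \<Rightarrow> bool" where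
  "joined X x y \<longleftrightarrow> (\<lambda>a b. {a, b} \<in> X)\<^sup>*\<^sup>* x y"

definition induced_edges :: "'a set set \<Rightarrow> 'a set \<Rightarrow> 'a set set" where
  "induced_edges E W = {e \<in> E. e \<subseteq> W}"

definition components :: "'a set \<Rightarrow> 'a set set \<Rightarrow> 'a set set" where
  "components V E = (\<lambda>x. {y \<in> V. joined E x y}) ` V"

definition del_vertex_edges :: "'a set set \<Rightarrow> 'a \<Rightarrow> 'a set set" where
  "del_vertex_edges E w = {e \<in> E. w \<notin> e}"

definition cut_vertex :: "'a set \<Rightarrow> 'a set set \<Rightarrow> 'a \<Rightarrow> bool" where
  "cut_vertex V E w \<longleftrightarrow> w \<in> V \<and>
     card (components (V - {w}) (del_vertex_edges E w)) > card (components V E)"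

text \<open>Bunkbed graph: vertex (x,False) is x^-, (x,True) is x^+.\<close>
definition bb_vertices :: "'a set \<Rightarrow> ('a \<times> bool) set" where
  "bb_vertices V = V \<times> UNIV"

definition bb_edges :: "'a set \<Rightarrow> 'a set set \<Rightarrow> ('a \<times> bool) set set" where
  "bb_edges V E =
     {{(x, b), (y, b)} | x y b. {x, y} \<in> E} \<union> {{(x, False), (x, True)} | x. x \<in> V}"

definition perc_prob :: "'e set \<Rightarrow> ('e \<Rightarrow> real) \<Rightarrow> ('e set \<Rightarrow> bool) \<Rightarrow> real" where
  "perc_prob E mu A =
     (\<Sum>X\<in>{X. X \<subseteq> E \<and> A X}. (\<Prod>e\<in>X. mu e) * (\<Prod>e\<in>E - X. 1 - mu e))"

end

theory Submission
  imports Defs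
begin

text \<open>Deleting the vertex v splits the base graph into the part VG spanned by the chosen
components and the part VH spanned by the others, which meet only in v. So the bunkbed edges
split into those of G and those of H0, and G and H0 share only the two vertices v- and v+.
An open path from x in G to y in H0 can always be rerouted to cross from G to H0 exactly
once, at v- or at v+: with only two crossing points, a return to G followed by a second
crossing can be shortcut. Hence the event that x and y are joined is the union of the two
events "x is joined to c in G and c to y in H0" for c = v-, v+; inclusion-exclusion and
the independence of the edges of G and of H0 give the formula.\<close>

lemma joined_refl [simp]: "joined X a a"
  by (simp add: joined_def)

lemma joined_edge: "{a, b} \<in> X \<Longrightarrow> joined X a b"
  unfolding joined_def by (rule r_into_rtranclp) simp

lemma joined_trans: "joined X a b \<Longrightarrow> joined X b c \<Longrightarrow> joined X a c"
  unfolding joined_def by (rule rtranclp_trans)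

lemma joined_sym: "joined X a b \<Longrightarrow> joined X b a"
proof -
  have "symp (\<lambda>a b. {a, b} \<in> X)"
    by (rule sympI) (simp add: insert_commute)
  then show "joined X a b \<Longrightarrow> joined X b a"
    unfolding joined_def by (metis symp_rtranclp sympD)
qed

lemma joined_mono: "joined X a b \<Longrightarrow> X \<subseteq> Y \<Longrightarrow> joined Y a b"
  unfolding joined_def by (auto elim: rtranclp_mono[THEN predicate2D, rotated])

lemma joined_stays_within:
  "joined X a b \<Longrightarrow> a \<in> W \<Longrightarrow> \<forall>e\<in>X. e \<subseteq> W \<Longrightarrow> b \<in> W"
  unfolding joined_def by (induction rule: rtranclp_induct) auto

text \<open>Invariant along a path in Y \<union> Z starting in the Y-side: with only two switching vertices
in S, any such path can be shortened to a Y-path, then a Z-path, then a Y-path.\<close>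
definition joined_YZY :: "'a set set \<Rightarrow> 'a set set \<Rightarrow> 'a set \<Rightarrow> 'a \<Rightarrow> 'a \<Rightarrow> bool" where
  "joined_YZY Y Z S x z \<longleftrightarrow> joined Y x z
     \<or> (\<exists>c\<in>S. joined Y x c \<and> joined Z c z)
     \<or> (\<exists>c\<in>S. \<exists>d\<in>S. joined Y x c \<and> joined Z c d \<and> joined Y d z)"

lemma joined_YZY_E:
  assumes "joined_YZY Y Z S x z"
  obtains (Y) "joined Y x z"
    | (YZ) c where "c \<in> S" "joined Y x c" "joined Z c z"
    | (YZY) c d where "c \<in> S" "d \<in> S" "joined Y x c" "joined Z c d" "joined Y d z"
  using assms unfolding joined_YZY_def by blast

context
  fixes Y Z :: "'a set set" and WY WZ :: "'a set" and p q :: 'a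
  assumes Y_within: "\<forall>e\<in>Y. e \<subseteq> WY" and Z_within: "\<forall>e\<in>Z. e \<subseteq> WZ"
    and separator: "WY \<inter> WZ \<subseteq> {p, q}"
    and separator_in: "{p, q} \<subseteq> WY \<inter> WZ"
begin

lemma joined_YZY_step_Y:
  assumes "joined_YZY Y Z {p, q} x z" "{z, w} \<in> Y"
  shows "joined_YZY Y Z {p, q} x w"
proof -
  have zw: "joined Y z w" using assms(2) by (rule joined_edge)
  from assms(1) show ?thesis
  proof (cases rule: joined_YZY_E)
    case Y
    then show ?thesis unfolding joined_YZY_def using joined_trans[OF Y zw] by blast
  next
    case (YZ c)
    have "z \<in> WZ" using joined_stays_within[OF YZ(3) _ Z_within] YZ(1) separator_in by blast
    moreover have "z \<in> WY" using assms(2) Y_within by blast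
    ultimately have "z \<in> {p, q}" using separator by blast
    then show ?thesis unfolding joined_YZY_def using YZ zw by blast
  next
    case (YZY c d)
    then show ?thesis unfolding joined_YZY_def using joined_trans[OF YZY(5) zw] by blast
  qed
qed

lemma joined_YZY_step_Z:
  assumes "joined_YZY Y Z {p, q} x z" "{z, w} \<in> Z" "x \<in> WY"
  shows "joined_YZY Y Z {p, q} x w"
proof -
  have zw: "joined Z z w" using assms(2) by (rule joined_edge)
  have z_sep: "z \<in> {p, q}" if "joined Y a z" "a \<in> WY" for a
    using joined_stays_within[OF that Y_within] assms(2) Z_within separator by blast
  from assms(1) show ?thesis
  proof (cases rule: joined_YZY_E)
    case Y
    then show ?thesis unfolding joined_YZY_def using z_sep assms(3) zw by blast
  next
    case (YZ c)
    then show ?thesis unfolding joined_YZY_def using joined_trans[OF YZ(3) zw] by blast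
  next
    case (YZY c d)
    have "z \<in> {p, q}" using z_sep YZY separator_in by blast
    \<comment> \<open>Three points among the two separator vertices: two of them coincide.\<close>
    then consider "z = d" | "c = z" | "c = d" using YZY by blast
    then show ?thesis
    proof cases
      case 1
      then show ?thesis unfolding joined_YZY_def using YZY joined_trans[OF YZY(4)] zw by blast
    next
      case 2
      then show ?thesis unfolding joined_YZY_def using YZY zw by blast
    next
      case 3
      then show ?thesis
        unfolding joined_YZY_def using YZY zw \<open>z \<in> {p, q}\<close> joined_trans[OF YZY(3)] by blast
    qed
  qed
qed

lemma joined_Un_imp_joined_YZY:
  assumes "joined (Y \<union> Z) x z" "x \<in> WY"
  shows "joined_YZY Y Z {p, q} x z"
  using assms(1) unfolding joined_def
proof (induction rule: rtranclp_induct)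
  case base
  then show ?case by (simp add: joined_YZY_def joined_def)
next
  case (step z w)
  then show ?case
    using joined_YZY_step_Y joined_YZY_step_Z assms(2) by blast
qed

lemma joined_YZY_imp_cross_once:
  assumes "joined_YZY Y Z {p, q} x y" "x \<in> WY" "y \<in> WZ"
  shows "\<exists>c\<in>{p, q}. joined Y x c \<and> joined Z c y"
  using assms(1)
proof (cases rule: joined_YZY_E)
  case Y
  moreover have "y \<in> {p, q}"
    using joined_stays_within[OF Y assms(2) Y_within] assms(3) separator by blast
  ultimately show ?thesis by auto
next
  case (YZ c)
  then show ?thesis by blast
next
  case (YZY c d)
  have "y \<in> {p, q}"
    using joined_stays_within[OF YZY(5) _ Y_within] YZY(2) separator_in assms(3) separator
    by blast
  then consider "y = d" | "c = y" | "c = d" using YZY by blast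
  then show ?thesis
  proof cases
    case 1
    then show ?thesis using YZY by blast
  next
    case 2
    then show ?thesis using YZY \<open>y \<in> {p, q}\<close> by auto
  next
    case 3
    then show ?thesis using YZY \<open>y \<in> {p, q}\<close> joined_trans[OF YZY(3)] by auto
  qed
qed

lemma joined_Un_iff_via_separator:
  assumes "x \<in> WY" "y \<in> WZ"
  shows "joined (Y \<union> Z) x y \<longleftrightarrow>
    (joined Y x p \<and> joined Z p y) \<or> (joined Y x q \<and> joined Z q y)"
proof
  assume "joined (Y \<union> Z) x y"
  then show "(joined Y x p \<and> joined Z p y) \<or> (joined Y x q \<and> joined Z q y)"
    using joined_YZY_imp_cross_once joined_Un_imp_joined_YZY assms by blast
next
  assume "(joined Y x p \<and> joined Z p y) \<or> (joined Y x q \<and> joined Z q y)"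
  then show "joined (Y \<union> Z) x y"
    by (meson joined_mono joined_trans Un_upper1 Un_upper2)
qed

end

lemma perc_prob_cong:
  "(\<And>X. X \<subseteq> E \<Longrightarrow> P X = Q X) \<Longrightarrow> perc_prob E mu P = perc_prob E mu Q"
  unfolding perc_prob_def by (intro sum.cong) auto

lemma perc_prob_disj:
  assumes "finite E"
  shows "perc_prob E mu (\<lambda>X. P X \<or> Q X) =
    perc_prob E mu P + perc_prob E mu Q - perc_prob E mu (\<lambda>X. P X \<and> Q X)"
proof -
  let ?w = "\<lambda>X. (\<Prod>e\<in>X. mu e) * (\<Prod>e\<in>E - X. 1 - mu e)"
  have fin: "finite {X. X \<subseteq> E \<and> R X}" for R
    using assms by (auto intro: rev_finite_subset[of "Pow E"])
  have union: "{X. X \<subseteq> E \<and> (P X \<or> Q X)} = {X. X \<subseteq> E \<and> P X} \<union> {X. X \<subseteq> E \<and> Q X}"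
    and inter: "{X. X \<subseteq> E \<and> (P X \<and> Q X)} = {X. X \<subseteq> E \<and> P X} \<inter> {X. X \<subseteq> E \<and> Q X}"
    by auto
  show ?thesis
    unfolding perc_prob_def union inter using sum.union_inter[OF fin[of P] fin[of Q], of ?w] by simp
qed

lemma perc_prob_independent:
  assumes f1: "finite E1" and f2: "finite E2" and disj: "E1 \<inter> E2 = {}"
  shows "perc_prob (E1 \<union> E2) mu (\<lambda>X. A (X \<inter> E1) \<and> B (X \<inter> E2))
    = perc_prob E1 mu A * perc_prob E2 mu B"
proof -
  define w where "w E Y = (\<Prod>e\<in>Y. mu e) * (\<Prod>e\<in>E - Y. 1 - mu e)" for E Y
  define S1 where "S1 = {X. X \<subseteq> E1 \<and> A X}"
  define S2 where "S2 = {X. X \<subseteq> E2 \<and> B X}"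
  define S where "S = {X. X \<subseteq> E1 \<union> E2 \<and> A (X \<inter> E1) \<and> B (X \<inter> E2)}"
  have fin: "finite S1" "finite S2"
    unfolding S1_def S2_def using f1 f2 by (auto intro: rev_finite_subset[of "Pow _"])
  have w_Un: "w (E1 \<union> E2) (Y \<union> Z) = w E1 Y * w E2 Z" if "Y \<subseteq> E1" "Z \<subseteq> E2" for Y Z
  proof -
    have "finite Y" "finite Z" using that f1 f2 finite_subset by blast+
    moreover have "(E1 \<union> E2) - (Y \<union> Z) = (E1 - Y) \<union> (E2 - Z)" using that disj by blast
    moreover have "Y \<inter> Z = {}" "(E1 - Y) \<inter> (E2 - Z) = {}" using that disj by blast+
    ultimately show ?thesis
      unfolding w_def using f1 f2 by (simp add: prod.union_disjoint algebra_simps)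
  qed
  have restrict: "(Y \<union> Z) \<inter> E1 = Y" "(Y \<union> Z) \<inter> E2 = Z" if "Y \<subseteq> E1" "Z \<subseteq> E2" for Y Z
    using disj that by blast+
  have bij: "bij_betw (\<lambda>(Y, Z). Y \<union> Z) (S1 \<times> S2) S"
    by (rule bij_betw_byWitness[where f' = "\<lambda>X. (X \<inter> E1, X \<inter> E2)"])
      (use disj in \<open>auto simp: S1_def S2_def S_def restrict\<close>)
  have "perc_prob E1 mu A * perc_prob E2 mu B = (\<Sum>Y\<in>S1. w E1 Y) * (\<Sum>Z\<in>S2. w E2 Z)"
    unfolding perc_prob_def S1_def S2_def w_def by simp
  also have "\<dots> = (\<Sum>(Y, Z)\<in>S1 \<times> S2. w E1 Y * w E2 Z)"
    by (simp add: sum_product sum.cartesian_product)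
  also have "\<dots> = (\<Sum>(Y, Z)\<in>S1 \<times> S2. w (E1 \<union> E2) (Y \<union> Z))"
    by (rule sum.cong) (auto simp: S1_def S2_def w_Un)
  also have "\<dots> = (\<Sum>X\<in>S. w (E1 \<union> E2) X)"
    using sum.reindex_bij_betw[OF bij] by (simp add: case_prod_unfold)
  also have "\<dots> = perc_prob (E1 \<union> E2) mu (\<lambda>X. A (X \<inter> E1) \<and> B (X \<inter> E2))"
    unfolding perc_prob_def S_def w_def by simp
  finally show ?thesis by simp
qed

lemma perc_prob_union_of_independent_events:
  assumes "finite E1" "finite E2" "E1 \<inter> E2 = {}"
  shows "perc_prob (E1 \<union> E2) mu
      (\<lambda>X. (A (X \<inter> E1) \<and> B (X \<inter> E2)) \<or> (A' (X \<inter> E1) \<and> B' (X \<inter> E2)))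
    = perc_prob E1 mu A * perc_prob E2 mu B + perc_prob E1 mu A' * perc_prob E2 mu B'
      - perc_prob E1 mu (\<lambda>X. A X \<and> A' X) * perc_prob E2 mu (\<lambda>X. B X \<and> B' X)"
proof -
  have "perc_prob (E1 \<union> E2) mu
      (\<lambda>X. (A (X \<inter> E1) \<and> B (X \<inter> E2)) \<and> (A' (X \<inter> E1) \<and> B' (X \<inter> E2)))
    = perc_prob (E1 \<union> E2) mu
      (\<lambda>X. (A (X \<inter> E1) \<and> A' (X \<inter> E1)) \<and> (B (X \<inter> E2) \<and> B' (X \<inter> E2)))"
    by (rule perc_prob_cong) auto
  also have "\<dots> = perc_prob E1 mu (\<lambda>X. A X \<and> A' X) * perc_prob E2 mu (\<lambda>X. B X \<and> B' X)"
    using perc_prob_independent[OF assms, of mu "\<lambda>X. A X \<and> A' X" "\<lambda>X. B X \<and> B' X"] by simp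
  finally show ?thesis
    using assms by (simp add: perc_prob_disj perc_prob_independent)
qed

lemma perc_prob_joined_via_separator:
  assumes fin: "finite E1" "finite E2" and disj: "E1 \<inter> E2 = {}"
    and within: "\<forall>e\<in>E1. e \<subseteq> W1" "\<forall>e\<in>E2. e \<subseteq> W2"
    and separator: "W1 \<inter> W2 \<subseteq> {p, q}" and separator_in: "{p, q} \<subseteq> W1 \<inter> W2"
    and x: "x \<in> W1" and y: "y \<in> W2"
  shows "perc_prob (E1 \<union> E2) mu (\<lambda>X. joined X x y) =
      perc_prob E1 mu (\<lambda>X. joined X x p) * perc_prob E2 mu (\<lambda>X. joined X p y)
    + perc_prob E1 mu (\<lambda>X. joined X x q) * perc_prob E2 mu (\<lambda>X. joined X q y)
    - perc_prob E1 mu (\<lambda>X. joined X x p \<and> joined X x q)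
      * perc_prob E2 mu (\<lambda>X. joined X p y \<and> joined X q y)"
proof -
  have crossing: "joined X x y \<longleftrightarrow> (joined (X \<inter> E1) x p \<and> joined (X \<inter> E2) p y)
      \<or> (joined (X \<inter> E1) x q \<and> joined (X \<inter> E2) q y)" if "X \<subseteq> E1 \<union> E2" for X
  proof -
    have "\<forall>e\<in>X \<inter> E1. e \<subseteq> W1" "\<forall>e\<in>X \<inter> E2. e \<subseteq> W2"
      using within by auto
    moreover have X: "X = (X \<inter> E1) \<union> (X \<inter> E2)" using that by blast
    ultimately show ?thesis
      by (subst (1) X) (rule joined_Un_iff_via_separator[OF _ _ separator separator_in x y])
  qed
  have "perc_prob (E1 \<union> E2) mu (\<lambda>X. joined X x y) = perc_prob (E1 \<union> E2) mu
      (\<lambda>X. (joined (X \<inter> E1) x p \<and> joined (X \<inter> E2) p y)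
         \<or> (joined (X \<inter> E1) x q \<and> joined (X \<inter> E2) q y))"
    using crossing by (rule perc_prob_cong)
  also note perc_prob_union_of_independent_events[OF fin disj,
      where A = "\<lambda>X. joined X x p" and B = "\<lambda>X. joined X p y"
        and A' = "\<lambda>X. joined X x q" and B' = "\<lambda>X. joined X q y"]
  finally show ?thesis .
qed

lemma components_subset: "C \<in> components V E \<Longrightarrow> C \<subseteq> V"
  unfolding components_def by blast

lemma component_of_in_components: "a \<in> V \<Longrightarrow> {y \<in> V. joined E a y} \<in> components V E"
  unfolding components_def by blast

lemma components_disjoint:
  assumes "C1 \<in> components V E" "C2 \<in> components V E" "z \<in> C1" "z \<in> C2"
  shows "C1 = C2"
proof -
  obtain a b where C1: "C1 = {y \<in> V. joined E a y}" and C2: "C2 = {y \<in> V. joined E b y}"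
    using assms(1,2) unfolding components_def by blast
  have az: "joined E a z" and bz: "joined E b z" using assms(3,4) C1 C2 by auto
  have ab: "joined E a b" using joined_trans[OF az joined_sym[OF bz]] .
  have "joined E a y \<longleftrightarrow> joined E b y" for y
    using joined_trans[OF ab] joined_trans[OF joined_sym[OF ab]] by blast
  then show ?thesis unfolding C1 C2 by simp
qed

lemma components_edge_closed:
  assumes "C \<in> components V E" "{a, c} \<in> E" "a \<in> C" "c \<in> V"
  shows "c \<in> C"
proof -
  obtain b where C: "C = {y \<in> V. joined E b y}"
    using assms(1) unfolding components_def by blast
  have "joined E b a" using assms(3) C by blast
  then have "joined E b c" using joined_trans joined_edge[OF assms(2)] by metis
  then show ?thesis using C assms(4) by blast
qed

lemma split_at_vertex:
  assumes E_within: "\<forall>e\<in>E. e \<subseteq> V" and v: "v \<in> V"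
    and Cs: "Cs \<subseteq> components (V - {v}) (del_vertex_edges E v)"
  defines "VG \<equiv> \<Union>Cs \<union> {v}"
    and "VH \<equiv> \<Union>(components (V - {v}) (del_vertex_edges E v) - Cs) \<union> {v}"
  shows "V = VG \<union> VH" and "VG \<inter> VH = {v}"
    and "\<And>a c. {a, c} \<in> E \<Longrightarrow> {a, c} \<subseteq> VG \<or> {a, c} \<subseteq> VH"
proof -
  let ?D = "del_vertex_edges E v"
  let ?C = "components (V - {v}) ?D"
  define K where "K a = {y \<in> V - {v}. joined ?D a y}" for a
  have K: "K a \<in> ?C" "a \<in> K a" if "a \<in> V - {v}" for a
    unfolding K_def using component_of_in_components[OF that] that by simp_all
  have K_side: "K a \<subseteq> VG \<or> K a \<subseteq> VH" if "a \<in> V - {v}" for a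
    using K(1)[OF that] unfolding VG_def VH_def by blast
  have v_both: "v \<in> VG" "v \<in> VH" unfolding VG_def VH_def by simp_all
  have side: "a \<in> VG \<or> a \<in> VH" if "a \<in> V" for a
  proof (cases "a = v")
    case False
    then have "a \<in> V - {v}" using that by simp
    then show ?thesis using K_side K(2) by blast
  qed (use v_both in simp)
  show "V = VG \<union> VH"
  proof
    show "V \<subseteq> VG \<union> VH" using side by blast
    have "C \<subseteq> V" if "C \<in> ?C" for C using components_subset[OF that] by blast
    then show "VG \<union> VH \<subseteq> V" using Cs v unfolding VG_def VH_def by blast
  qed
  have "z = v" if z: "z \<in> VG" "z \<in> VH" for z
  proof (rule ccontr)
    assume "z \<noteq> v"
    then obtain C1 C2 where C: "C1 \<in> Cs" "C2 \<in> ?C - Cs" "z \<in> C1" "z \<in> C2"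
      using z unfolding VG_def VH_def by blast
    then have "C1 = C2" using components_disjoint[OF _ _ C(3,4)] Cs by blast
    then show False using C by blast
  qed
  then show "VG \<inter> VH = {v}" using v_both by blast
  fix a c
  assume ac: "{a, c} \<in> E"
  then have a: "a \<in> V" and c: "c \<in> V" using E_within by auto
  show "{a, c} \<subseteq> VG \<or> {a, c} \<subseteq> VH"
  proof (cases "a = v \<or> c = v")
    case True
    then show ?thesis using side[OF a] side[OF c] v_both by auto
  next
    case False
    then have a': "a \<in> V - {v}" and c': "c \<in> V - {v}" using a c by auto
    have "{a, c} \<in> ?D" using ac False unfolding del_vertex_edges_def by auto
    then have "c \<in> K a" using components_edge_closed[OF K(1)[OF a'] _ K(2)[OF a']] c' by blast
    then show ?thesis using K_side[OF a'] K(2)[OF a'] by blast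
  qed
qed

lemma bb_edges_within:
  "\<forall>e\<in>E. e \<subseteq> V \<Longrightarrow> \<forall>e\<in>bb_edges V E. e \<subseteq> bb_vertices V"
  unfolding bb_edges_def bb_vertices_def by blast

lemma induced_edges_within: "\<forall>e\<in>induced_edges E W. e \<subseteq> W"
  unfolding induced_edges_def by blast

lemma finite_bb_edges:
  assumes "finite V" "\<forall>e\<in>E. e \<subseteq> V"
  shows "finite (bb_edges V E)"
proof (rule finite_subset)
  show "bb_edges V E \<subseteq> Pow (bb_vertices V)" using bb_edges_within[OF assms(2)] by blast
  show "finite (Pow (bb_vertices V))" using assms(1) by (simp add: bb_vertices_def)
qed

lemma bb_edges_mono: "V \<subseteq> V' \<Longrightarrow> E \<subseteq> E' \<Longrightarrow> bb_edges V E \<subseteq> bb_edges V' E'"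
  unfolding bb_edges_def by blast

lemma bb_edges_horizontalI: "{a, c} \<in> E \<Longrightarrow> {(a, b), (c, b)} \<in> bb_edges V E"
  unfolding bb_edges_def by blast

lemma bb_edges_verticalI: "a \<in> V \<Longrightarrow> {(a, False), (a, True)} \<in> bb_edges V E"
  unfolding bb_edges_def by blast

lemma bb_edges_cases:
  assumes "e \<in> bb_edges V E"
  obtains (horizontal) a c b where "e = {(a, b), (c, b)}" "{a, c} \<in> E"
    | (vertical) a where "e = {(a, False), (a, True)}" "a \<in> V"
  using assms unfolding bb_edges_def by blast

lemma bb_edges_split_at_vertex:
  assumes V: "V = VG \<union> VH" and VGH: "VG \<inter> VH = {v}"
    and E_split: "\<And>a c. {a, c} \<in> E \<Longrightarrow> {a, c} \<subseteq> VG \<or> {a, c} \<subseteq> VH"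
  shows "bb_edges V E = bb_edges VG (induced_edges E VG)
    \<union> (bb_edges VH (induced_edges E VH) - {{(v, False), (v, True)}})"
    (is "_ = ?G \<union> (?H - {?pq})")
proof
  have "?G \<subseteq> bb_edges V E" "?H \<subseteq> bb_edges V E"
    by (rule bb_edges_mono; use V in \<open>auto simp: induced_edges_def\<close>)+
  then show "?G \<union> (?H - {?pq}) \<subseteq> bb_edges V E" by blast
  show "bb_edges V E \<subseteq> ?G \<union> (?H - {?pq})"
  proof
    fix e assume "e \<in> bb_edges V E"
    then show "e \<in> ?G \<union> (?H - {?pq})"
    proof (cases rule: bb_edges_cases)
      case (horizontal a c b)
      have "e \<noteq> ?pq" using horizontal(1) by (cases b) (auto simp: doubleton_eq_iff)
      moreover have "{a, c} \<in> induced_edges E VG \<or> {a, c} \<in> induced_edges E VH"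
        using E_split[OF horizontal(2)] horizontal(2) unfolding induced_edges_def by blast
      ultimately show ?thesis
        using bb_edges_horizontalI[of a c _ b] unfolding horizontal(1) by auto
    next
      case (vertical a)
      consider "a \<in> VG" | "a \<in> VH" "a \<noteq> v" using vertical(2) V VGH by blast
      then show ?thesis
      proof cases
        case 1
        then show ?thesis unfolding vertical(1) by (simp add: bb_edges_verticalI)
      next
        case 2
        then have "e \<noteq> ?pq" using vertical(1) by (auto simp: doubleton_eq_iff)
        moreover have "e \<in> ?H" unfolding vertical(1) using 2(1) by (rule bb_edges_verticalI)
        ultimately show ?thesis by simp
      qed
    qed
  qed
qed

lemma bb_edges_split_disjoint:
  assumes VGH: "VG \<inter> VH \<subseteq> {v}" and card_E: "\<forall>e\<in>E. card e = 2"
  shows "bb_edges VG (induced_edges E VG)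
    \<inter> (bb_edges VH (induced_edges E VH) - {{(v, False), (v, True)}}) = {}"
proof -
  have False if eG: "e \<in> bb_edges VG (induced_edges E VG)"
    and eH: "e \<in> bb_edges VH (induced_edges E VH)" and not_pq: "e \<noteq> {(v, False), (v, True)}"
  for e
  proof -
    have "e \<subseteq> bb_vertices VH"
      using bb_edges_within[OF induced_edges_within] eH by blast
    then have e_VH: "(a, b) \<in> e \<Longrightarrow> a \<in> VH" for a b unfolding bb_vertices_def by blast
    from eG show False
    proof (cases rule: bb_edges_cases)
      case (horizontal a c b)
      then have "a \<in> VG" "c \<in> VG" "a \<in> VH" "c \<in> VH"
        using e_VH unfolding induced_edges_def by auto
      then have "{a, c} = {v}" using VGH by blast
      then show False using horizontal(2) card_E unfolding induced_edges_def by auto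
    next
      case (vertical a)
      then have "a = v" using e_VH[of a False] VGH by blast
      then show False using vertical not_pq by blast
    qed
  qed
  then show ?thesis by blast
qed

theorem lemma3p3:
  fixes VF :: "'a set" and EF :: "'a set set" and v :: 'a
    and Cs :: "'a set set" and mu :: "('a \<times> bool) set \<Rightarrow> real"
  assumes graph: "simple_graph VF EF"
    and cut: "cut_vertex VF EF v"
    and k2: "card (components (VF - {v}) (del_vertex_edges EF v)) \<ge> 2"
    and Cs: "Cs \<subseteq> components (VF - {v}) (del_vertex_edges EF v)"
    and weight: "\<forall>e\<in>bb_edges VF EF. 0 \<le> mu e \<and> mu e \<le> 1"
  defines "VG \<equiv> \<Union>Cs \<union> {v}"
    and "VH \<equiv> \<Union>(components (VF - {v}) (del_vertex_edges EF v) - Cs) \<union> {v}"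
  defines "EF' \<equiv> bb_edges VF EF"
    and "EG \<equiv> bb_edges VG (induced_edges EF VG)"
    and "EH0 \<equiv> bb_edges VH (induced_edges EF VH) - {{(v, False), (v, True)}}"
  assumes x: "x \<in> bb_vertices VG" and y: "y \<in> bb_vertices VH"
  shows "perc_prob EF' mu (\<lambda>X. joined X x y) =
      perc_prob EG mu (\<lambda>X. joined X x (v, False)) * perc_prob EH0 mu (\<lambda>X. joined X (v, False) y)
    + perc_prob EG mu (\<lambda>X. joined X x (v, True)) * perc_prob EH0 mu (\<lambda>X. joined X (v, True) y)
    - perc_prob EG mu (\<lambda>X. joined X x (v, False) \<and> joined X x (v, True))
      * perc_prob EH0 mu (\<lambda>X. joined X (v, False) y \<and> joined X (v, True) y)"
proof -
  have E_within: "\<forall>e\<in>EF. e \<subseteq> VF" and card_E: "\<forall>e\<in>EF. card e = 2" and "finite VF"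
    using graph unfolding simple_graph_def by auto
  have "v \<in> VF" using cut unfolding cut_vertex_def by blast
  note parts = split_at_vertex[OF E_within this Cs, folded VG_def VH_def]
  have EF'_split: "EF' = EG \<union> EH0"
    unfolding EF'_def EG_def EH0_def using parts by (rule bb_edges_split_at_vertex)
  have disjoint: "EG \<inter> EH0 = {}"
    unfolding EG_def EH0_def using parts(2) card_E by (intro bb_edges_split_disjoint) auto
  have finite: "finite EG" "finite EH0"
    using finite_bb_edges[OF \<open>finite VF\<close> E_within] EF'_split unfolding EF'_def by auto
  have G_within: "\<forall>e\<in>EG. e \<subseteq> bb_vertices VG" and H_within: "\<forall>e\<in>EH0. e \<subseteq> bb_vertices VH"
    unfolding EG_def EH0_def using bb_edges_within[OF induced_edges_within] by blast+
  have separator: "bb_vertices VG \<inter> bb_vertices VH \<subseteq> {(v, False), (v, True)}"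
    and separator_in: "{(v, False), (v, True)} \<subseteq> bb_vertices VG \<inter> bb_vertices VH"
    using parts(2) unfolding bb_vertices_def by auto
  show ?thesis
    unfolding EF'_split
    by (rule perc_prob_joined_via_separator[OF finite disjoint G_within H_within
          separator separator_in x y])
qed

end
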